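(* Let $S=(s_{ij})$ and $C=(c_{ij})$ be real $n\times n$ matrices with spectra (counted with multiplicities) $\sigma(S)=(\lambda_1,\ldots,\lambda_n)$ and $\sigma(C)=(\mu_1,\ldots,\mu_n)$, and let $0\le\gamma\le 1$. Suppose $|c_{ij}|\le s_{ij}$ for all $1\le i,j\le n$ (equivalently, $S$, $S+C$ and $S-C$ are entrywise nonnegative). Then $\tfrac12(S+\gamma C)$ and $\tfrac12(S-\gamma C)$ are nonnegative, and the $2n\times 2n$ block matrices $M_{\pm\gamma}=(M_{ij,\pm\gamma})_{i,j=1}^n$ with $$M_{ij,\pm\gamma}=\begin{pmatrix}\frac{s_{ij}\pm\gamma c_{ij}}{2} & \frac{s_{ij}\mp\gamma c_{ij}}{2}\\ \frac{s_{ij}\mp\gamma c_{ij}}{2} & \frac{s_{ij}\pm\gamma c_{ij}}{2}\end{pmatrix}$$ are nonnegative and realize, respectively, the lists $(\lambda_1,\ldots,\lambda_n,\gamma\mu_1,\ldots,\gamma\mu_n)$ (for $M_{+\gamma}$) and $(\lambda_1,\ldots,\lambda_n,-\gamma\mu_1,\ldots,-\gamma\mu_n)$ (for $M_{-\gamma}$).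
   Context: A matrix realizes a list of complex numbers if the list is its spectrum counted with multiplicities. Nonnegative means entrywise nonnegative. *)

theory Defs
  imports "Jordan_Normal_Form.Char_Poly"
begin

definition nonneg_mat :: "real mat \<Rightarrow> bool" where
  "nonneg_mat A \<longleftrightarrow> (\<forall>i<dim_row A. \<forall>j<dim_col A. A $$ (i,j) \<ge> 0)"

definition realizes :: "real mat \<Rightarrow> complex list \<Rightarrow> bool" where
  "realizes A ls \<longleftrightarrow> A \<in> carrier_mat (length ls) (length ls) \<and>
     char_poly (map_mat complex_of_real A) = (\<Prod>a\<leftarrow>ls. [:- a, 1:])"

text \<open>Row/column index p corresponds to block p div 2, position p mod 2 inside the block.
  M_{+gamma} = block_mat S C gamma, M_{-gamma} = block_mat S C (-gamma).\<close>
definition block_mat :: "real mat \<Rightarrow> real mat \<Rightarrow> real \<Rightarrow> real mat" where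
  "block_mat S C g = mat (2 * dim_row S) (2 * dim_row S) (\<lambda>(p,q).
     (if p mod 2 = q mod 2
      then (S $$ (p div 2, q div 2) + g * C $$ (p div 2, q div 2)) / 2
      else (S $$ (p div 2, q div 2) - g * C $$ (p div 2, q div 2)) / 2))"

end

theory Submission imports Defs "Jordan_Normal_Form.Schur_Decomposition" begin

text \<open>Each 2x2 block of the block matrix has the form [[a, b], [b, a]] with a + b = s and
  a - b = k c, so it has eigenvectors (1, 1) and (1, -1) with eigenvalues s and k c.
  Collecting these vectors over all blocks gives an invertible matrix P, with inverse
  P^T / 2, that conjugates the block matrix into the block diagonal matrix diag(S, k C).
  Hence its spectrum is that of S followed by k times that of C. Nonnegativity of the
  entries (s +/- k c) / 2 follows from |k c| <= |c| <= s.\<close>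

lemma sum_double_lessThan_pairs:
  "(\<Sum>r\<in>{0..<2*n}. f r) = (\<Sum>j<n. f (2*j) + f (2*j+1::nat))" for f :: "nat \<Rightarrow> 'a::comm_monoid_add"
proof (induct n)
  case (Suc n)
  have "{0..<2*Suc n} = insert (Suc (2*n)) (insert (2*n) {0..<2*n})" by auto
  then show ?case using Suc by (simp add: ac_simps)
qed simp

lemma sum_double_lessThan_halves:
  "(\<Sum>r\<in>{0..<2*n}. f r) = (\<Sum>j<n. f j + f (n + j::nat))" for f :: "nat \<Rightarrow> 'a::comm_monoid_add"
proof -
  have "{0..<2*n} = {0..<n} \<union> {n..<n+n}" by auto
  then have "(\<Sum>r\<in>{0..<2*n}. f r) = (\<Sum>r\<in>{0..<n}. f r) + (\<Sum>r\<in>{n..<n+n}. f r)"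
    by (simp add: sum.union_disjoint ivl_disj_int)
  also have "(\<Sum>r\<in>{n..<n+n}. f r) = (\<Sum>j<n. f (n+j))"
    using sum.shift_bounds_nat_ivl[of f 0 n n] by (simp add: atLeast0LessThan add.commute)
  finally show ?thesis by (simp add: sum.distrib atLeast0LessThan)
qed

lemma nat_eq_iff_div_2_and_parity: "(p::nat) = p' \<longleftrightarrow> p div 2 = p' div 2 \<and> (even p \<longleftrightarrow> even p')"
  by (metis div_mult_mod_eq odd_iff_mod_2_eq_one even_iff_mod_2_eq_zero)

text \<open>Column j < n is e_(2j) + e_(2j+1), column n + j is e_(2j) - e_(2j+1).\<close>
definition pair_basis_entry :: "nat \<Rightarrow> nat \<Rightarrow> nat \<Rightarrow> real" where
  "pair_basis_entry n p q = (if q < n then (if p div 2 = q then 1 else 0)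
     else (if p div 2 = q - n then (if even p then 1 else -1) else 0))"

definition pair_basis_mat :: "nat \<Rightarrow> real mat" where
  "pair_basis_mat n = mat (2*n) (2*n) (\<lambda>(p,q). pair_basis_entry n p q)"

definition pair_basis_inv :: "nat \<Rightarrow> real mat" where
  "pair_basis_inv n = mat (2*n) (2*n) (\<lambda>(q,p). pair_basis_entry n p q / 2)"

lemma pair_basis_entry_low: "j < n \<Longrightarrow> pair_basis_entry n p j = (if p div 2 = j then 1 else 0)"
  by (simp add: pair_basis_entry_def)

lemma pair_basis_entry_high:
  "pair_basis_entry n p (n+j) = (if p div 2 = j then (if even p then 1 else -1) else 0)"
  by (simp add: pair_basis_entry_def)

lemma pair_basis_entry_even_row:
  "pair_basis_entry n (2*j) q = (if q < n then (if j = q then 1 else 0) else (if j = q - n then 1 else 0))"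
  by (simp add: pair_basis_entry_def)

lemma pair_basis_entry_odd_row:
  "pair_basis_entry n (2*j+1) q = (if q < n then (if j = q then 1 else 0) else (if j = q - n then -1 else 0))"
  by (simp add: pair_basis_entry_def)

lemma pair_basis_mat_carrier: "pair_basis_mat n \<in> carrier_mat (2*n) (2*n)"
  and pair_basis_inv_carrier: "pair_basis_inv n \<in> carrier_mat (2*n) (2*n)"
  by (auto simp: pair_basis_mat_def pair_basis_inv_def)

lemma pair_basis_mat_inv_right: "pair_basis_mat n * pair_basis_inv n = 1\<^sub>m (2*n)"
proof (rule eq_matI)
  fix p p' assume p: "p < dim_row (1\<^sub>m (2*n))" and p': "p' < dim_col (1\<^sub>m (2*n))"
  let ?e = "pair_basis_entry n"
  have "(pair_basis_mat n * pair_basis_inv n) $$ (p,p') = (\<Sum>r\<in>{0..<2*n}. ?e p r * (?e p' r / 2))"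
    using p p' by (simp add: pair_basis_mat_def pair_basis_inv_def scalar_prod_def)
  also have "\<dots> = (\<Sum>j<n. ?e p j * (?e p' j / 2) + ?e p (n+j) * (?e p' (n+j) / 2))"
    by (rule sum_double_lessThan_halves)
  also have "\<dots> = (\<Sum>j<n. if j = p div 2 then (if p = p' then 1 else 0) else 0)"
    by (rule sum.cong[OF refl])
      (simp add: pair_basis_entry_low pair_basis_entry_high nat_eq_iff_div_2_and_parity[of p p'])
  also have "\<dots> = 1\<^sub>m (2*n) $$ (p,p')"
    using p p' by (simp add: less_mult_imp_div_less mult.commute)
  finally show "(pair_basis_mat n * pair_basis_inv n) $$ (p,p') = 1\<^sub>m (2*n) $$ (p,p')" .
qed (auto simp: pair_basis_mat_def pair_basis_inv_def)

lemma pair_basis_mat_inv_left: "pair_basis_inv n * pair_basis_mat n = 1\<^sub>m (2*n)"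
proof (rule eq_matI)
  fix q q' assume q: "q < dim_row (1\<^sub>m (2*n))" and q': "q' < dim_col (1\<^sub>m (2*n))"
  let ?e = "pair_basis_entry n"
  have "(pair_basis_inv n * pair_basis_mat n) $$ (q,q') = (\<Sum>r\<in>{0..<2*n}. ?e r q / 2 * ?e r q')"
    using q q' by (simp add: pair_basis_mat_def pair_basis_inv_def scalar_prod_def)
  also have "\<dots> = (\<Sum>j<n. ?e (2*j) q / 2 * ?e (2*j) q' + ?e (2*j+1) q / 2 * ?e (2*j+1) q')"
    by (rule sum_double_lessThan_pairs)
  also have "\<dots> = (\<Sum>j<n. if j = (if q < n then q else q - n) then (if q = q' then 1 else 0) else 0)"
    unfolding pair_basis_entry_even_row pair_basis_entry_odd_row using q q'
    by (intro sum.cong[OF refl]) (cases "q < n"; cases "q' < n"; auto)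
  also have "\<dots> = 1\<^sub>m (2*n) $$ (q,q')" using q q' by (cases "q < n") auto
  finally show "(pair_basis_inv n * pair_basis_mat n) $$ (q,q') = 1\<^sub>m (2*n) $$ (q,q')" .
qed (auto simp: pair_basis_mat_def pair_basis_inv_def)

lemma block_mat_carrier: "S \<in> carrier_mat n n \<Longrightarrow> block_mat S C k \<in> carrier_mat (2*n) (2*n)"
  by (auto simp: block_mat_def)

lemma block_mat_mult_pair_basis:
  fixes k :: real
  assumes S: "S \<in> carrier_mat n n" and C: "C \<in> carrier_mat n n"
  defines "D \<equiv> four_block_mat S (0\<^sub>m n n) (0\<^sub>m n n) (k \<cdot>\<^sub>m C)"
  shows "block_mat S C k * pair_basis_mat n = pair_basis_mat n * D"
proof (rule eq_matI)
  let ?e = "pair_basis_entry n" and ?M = "block_mat S C k"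
  have dS: "dim_row S = n" and dD: "dim_row D = 2*n" "dim_col D = 2*n"
    using S C by (auto simp: D_def)
  fix p q assume "p < dim_row (pair_basis_mat n * D)" and "q < dim_col (pair_basis_mat n * D)"
  then have p: "p < 2*n" and q: "q < 2*n" by (auto simp: pair_basis_mat_def dD)
  define val where "val = (if q < n then S $$ (p div 2, q) else
     (if even p then k * C $$ (p div 2, q - n) else - (k * C $$ (p div 2, q - n))))"
  have "(?M * pair_basis_mat n) $$ (p,q) = (\<Sum>r\<in>{0..<2*n}. ?M $$ (p,r) * ?e r q)"
    using p q by (simp add: pair_basis_mat_def block_mat_def dS scalar_prod_def)
  also have "\<dots> = (\<Sum>j<n. ?M $$ (p,2*j) * ?e (2*j) q + ?M $$ (p,2*j+1) * ?e (2*j+1) q)"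
    by (rule sum_double_lessThan_pairs)
  also have "\<dots> = (\<Sum>j<n. if j = (if q < n then q else q - n) then val else 0)"
  proof (rule sum.cong[OF refl])
    fix j assume j: "j \<in> {..<n}"
    then have "?M $$ (p,2*j) = (if even p then (S $$ (p div 2, j) + k * C $$ (p div 2, j)) / 2
       else (S $$ (p div 2, j) - k * C $$ (p div 2, j)) / 2)"
      and "?M $$ (p,2*j+1) = (if odd p then (S $$ (p div 2, j) + k * C $$ (p div 2, j)) / 2
       else (S $$ (p div 2, j) - k * C $$ (p div 2, j)) / 2)"
      using p by (auto simp: block_mat_def dS)
    then show "?M $$ (p,2*j) * ?e (2*j) q + ?M $$ (p,2*j+1) * ?e (2*j+1) q
       = (if j = (if q < n then q else q - n) then val else 0)"
      unfolding pair_basis_entry_even_row pair_basis_entry_odd_row val_def using q j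
      by (cases "q < n"; cases "even p"; auto simp: field_simps)
  qed
  also have "\<dots> = (\<Sum>j<n. if j = p div 2 then val else 0)" using p q by auto
  also have "\<dots> = (\<Sum>j<n. ?e p j * D $$ (j,q) + ?e p (n+j) * D $$ (n+j,q))"
  proof (rule sum.cong[OF refl])
    fix j assume j: "j \<in> {..<n}"
    then have "D $$ (j,q) = (if q < n then S $$ (j,q) else 0)"
      and "D $$ (n+j,q) = (if q < n then 0 else k * C $$ (j,q-n))"
      using q S C by (auto simp: D_def)
    then show "(if j = p div 2 then val else 0) = ?e p j * D $$ (j,q) + ?e p (n+j) * D $$ (n+j,q)"
      using j by (auto simp: pair_basis_entry_low pair_basis_entry_high val_def)
  qed
  also have "\<dots> = (\<Sum>r\<in>{0..<2*n}. ?e p r * D $$ (r,q))"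
    by (rule sum_double_lessThan_halves[symmetric])
  also have "\<dots> = (pair_basis_mat n * D) $$ (p,q)"
    using p q by (simp add: pair_basis_mat_def dD scalar_prod_def)
  finally show "(?M * pair_basis_mat n) $$ (p,q) = (pair_basis_mat n * D) $$ (p,q)" .
qed (insert S C, auto simp: pair_basis_mat_def D_def block_mat_def)

lemma similar_block_mat_four_block_diag:
  assumes S: "S \<in> carrier_mat n n" and C: "C \<in> carrier_mat n n"
  shows "similar_mat (block_mat S C k) (four_block_mat S (0\<^sub>m n n) (0\<^sub>m n n) (k \<cdot>\<^sub>m C))"
proof -
  let ?M = "block_mat S C k" and ?D = "four_block_mat S (0\<^sub>m n n) (0\<^sub>m n n) (k \<cdot>\<^sub>m C)"
    and ?P = "pair_basis_mat n" and ?Q = "pair_basis_inv n"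
  have M: "?M \<in> carrier_mat (2*n) (2*n)" and D: "?D \<in> carrier_mat (2*n) (2*n)"
    using S C by (auto simp: block_mat_carrier)
  note P = pair_basis_mat_carrier[of n] and Q = pair_basis_inv_carrier[of n]
  have "?M = ?M * (?P * ?Q)" using M by (simp add: pair_basis_mat_inv_right)
  also have "\<dots> = (?M * ?P) * ?Q" using M P Q by (simp add: assoc_mult_mat)
  also have "\<dots> = ?P * ?D * ?Q" by (simp add: block_mat_mult_pair_basis[OF S C])
  finally show ?thesis
    by (intro similar_matI[OF _ pair_basis_mat_inv_right pair_basis_mat_inv_left]) (use M D P Q in auto)
qed

lemma char_poly_smult_factorized:
  fixes A :: "complex mat"
  assumes A: "A \<in> carrier_mat n n" and cA: "char_poly A = (\<Prod>a\<leftarrow>es. [:- a, 1:])"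
  shows "char_poly (c \<cdot>\<^sub>m A) = (\<Prod>a\<leftarrow>es. [:- (c * a), 1:])"
proof -
  obtain B P Q where sd: "schur_decomposition A es = (B,P,Q)"
    by (cases "schur_decomposition A es") auto
  from schur_decomposition[OF A cA sd] have w: "similar_mat_wit A B P Q"
    and ut: "upper_triangular B" and dB: "diag_mat B = es" by auto
  from similar_mat_witD2[OF A w] have B: "B \<in> carrier_mat n n" by auto
  have "similar_mat (c \<cdot>\<^sub>m A) (c \<cdot>\<^sub>m B)"
    using similar_mat_wit_smult[OF w] unfolding similar_mat_def by blast
  then have "char_poly (c \<cdot>\<^sub>m A) = char_poly (c \<cdot>\<^sub>m B)" by (rule char_poly_similar)
  also have "\<dots> = (\<Prod>a\<leftarrow>diag_mat (c \<cdot>\<^sub>m B). [:- a, 1:])"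
    by (rule char_poly_upper_triangular[of _ n]) (use B ut in \<open>auto simp: upper_triangular_def\<close>)
  also have "diag_mat (c \<cdot>\<^sub>m B) = map (\<lambda>a. c * a) es"
    unfolding dB[symmetric] diag_mat_def using B by auto
  finally show ?thesis by (simp add: o_def)
qed

lemma realizes_carrier: "realizes A ls \<Longrightarrow> A \<in> carrier_mat (length ls) (length ls)"
  by (simp add: realizes_def)

lemma realizes_smult:
  assumes "realizes C mus"
  shows "realizes (k \<cdot>\<^sub>m C) (map (\<lambda>m. complex_of_real k * m) mus)"
proof -
  let ?n = "length mus"
  have C: "C \<in> carrier_mat ?n ?n" using assms by (rule realizes_carrier)
  have "map_mat complex_of_real (k \<cdot>\<^sub>m C) = complex_of_real k \<cdot>\<^sub>m map_mat complex_of_real C"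
    by (rule eq_matI) auto
  moreover have "char_poly (complex_of_real k \<cdot>\<^sub>m map_mat complex_of_real C)
      = (\<Prod>a\<leftarrow>mus. [:- (complex_of_real k * a), 1:])"
    by (rule char_poly_smult_factorized[of _ ?n]) (use assms C in \<open>auto simp: realizes_def\<close>)
  ultimately show ?thesis using C by (simp add: realizes_def o_def)
qed

lemma realizes_four_block_diag:
  assumes A: "realizes A ls" and B: "realizes B ms"
  shows "realizes (four_block_mat A (0\<^sub>m (length ls) (length ms)) (0\<^sub>m (length ms) (length ls)) B)
    (ls @ ms)"
proof -
  let ?h = "map_mat complex_of_real" and ?l = "length ls" and ?m = "length ms"
  have Ac: "A \<in> carrier_mat ?l ?l" and Bc: "B \<in> carrier_mat ?m ?m"
    using A B by (auto dest: realizes_carrier)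
  have zero: "?h (0\<^sub>m r c) = 0\<^sub>m r c" for r c
    by (rule eq_matI) auto
  have "?h (four_block_mat A (0\<^sub>m ?l ?m) (0\<^sub>m ?m ?l) B)
      = four_block_mat (?h A) (0\<^sub>m ?l ?m) (0\<^sub>m ?m ?l) (?h B)"
    by (subst map_four_block_mat[OF Ac zero_carrier_mat zero_carrier_mat Bc]) (simp add: zero)
  moreover have "char_poly (four_block_mat (?h A) (0\<^sub>m ?l ?m) (0\<^sub>m ?m ?l) (?h B))
      = char_poly (?h A) * char_poly (?h B)"
  proof (rule char_poly_0_block[OF refl])
    show "\<exists>es. char_poly (?h A) = (\<Prod>a\<leftarrow>es. [:- a, 1:])"
      using A by (auto simp: realizes_def)
    show "\<exists>es. char_poly (?h B) = (\<Prod>a\<leftarrow>es. [:- a, 1:])"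
      using B by (auto simp: realizes_def)
  qed (use Ac Bc in auto)
  ultimately show ?thesis using A B Ac Bc by (simp add: realizes_def)
qed

lemma realizes_similar:
  assumes "similar_mat A B" and "realizes B ls"
  shows "realizes A ls"
proof -
  let ?n = "length ls"
  have B: "B \<in> carrier_mat ?n ?n" using assms(2) by (rule realizes_carrier)
  then have A: "A \<in> carrier_mat ?n ?n"
    using similar_matD[OF assms(1)] by (metis carrier_matD(1) insert_subset)
  have "char_poly (map_mat complex_of_real A) = map_poly complex_of_real (char_poly A)"
    by (rule of_real_hom.char_poly_hom[OF A])
  also have "char_poly A = char_poly B" using assms(1) by (rule char_poly_similar)
  also have "map_poly complex_of_real (char_poly B) = char_poly (map_mat complex_of_real B)"
    by (rule of_real_hom.char_poly_hom[OF B, symmetric])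
  finally show ?thesis using A assms(2) by (simp add: realizes_def)
qed

lemma realizes_block_mat:
  assumes "realizes S lams" and "realizes C mus" and "length mus = length lams"
  shows "realizes (block_mat S C k) (lams @ map (\<lambda>m. complex_of_real k * m) mus)"
proof -
  let ?n = "length lams"
  have S: "S \<in> carrier_mat ?n ?n" and C: "C \<in> carrier_mat ?n ?n"
    using assms by (auto dest: realizes_carrier)
  have "realizes (four_block_mat S (0\<^sub>m ?n ?n) (0\<^sub>m ?n ?n) (k \<cdot>\<^sub>m C))
      (lams @ map (\<lambda>m. complex_of_real k * m) mus)"
    using realizes_four_block_diag[OF assms(1) realizes_smult[OF assms(2)]] assms(3) by simp
  with similar_block_mat_four_block_diag[OF S C] show ?thesis by (rule realizes_similar)
qed

lemma nonneg_block_mat: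
  assumes "S \<in> carrier_mat n n"
    and "\<And>i j. i < n \<Longrightarrow> j < n \<Longrightarrow> 0 \<le> S $$ (i,j) + k * C $$ (i,j) \<and> 0 \<le> S $$ (i,j) - k * C $$ (i,j)"
  shows "nonneg_mat (block_mat S C k)"
proof -
  have "0 \<le> block_mat S C k $$ (p,q)" if "p < 2*n" "q < 2*n" for p q
  proof -
    have "p div 2 < n" "q div 2 < n" using that by auto
    with assms(2)[OF this] show ?thesis using that assms(1) by (simp add: block_mat_def)
  qed
  then show ?thesis using assms(1) by (simp add: nonneg_mat_def block_mat_def)
qed

lemma abs_scaled_le_imp_nonneg:
  fixes s c k :: real
  assumes "\<bar>c\<bar> \<le> s" and "\<bar>k\<bar> \<le> 1"
  shows "0 \<le> s + k * c \<and> 0 \<le> s - k * c"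
proof -
  have "\<bar>k * c\<bar> \<le> \<bar>c\<bar>" using assms(2) by (simp add: abs_mult mult_left_le_one_le)
  with assms(1) show ?thesis by linarith
qed

theorem theorem3:
  fixes S C :: "real mat" and n :: nat and g :: real
    and lams mus :: "complex list"
  assumes "S \<in> carrier_mat n n" and "C \<in> carrier_mat n n"
    and "realizes S lams" and "realizes C mus"
    and "0 \<le> g" and "g \<le> 1"
    and "\<forall>i<n. \<forall>j<n. \<bar>C $$ (i,j)\<bar> \<le> S $$ (i,j)"
  shows "nonneg_mat ((1/2) \<cdot>\<^sub>m (S + g \<cdot>\<^sub>m C))
       \<and> nonneg_mat ((1/2) \<cdot>\<^sub>m (S - g \<cdot>\<^sub>m C))
       \<and> nonneg_mat (block_mat S C g)
       \<and> nonneg_mat (block_mat S C (- g))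
       \<and> realizes (block_mat S C g) (lams @ map (\<lambda>m. complex_of_real g * m) mus)
       \<and> realizes (block_mat S C (- g)) (lams @ map (\<lambda>m. - complex_of_real g * m) mus)"
proof -
  have entries: "0 \<le> S $$ (i,j) + g * C $$ (i,j) \<and> 0 \<le> S $$ (i,j) - g * C $$ (i,j)"
    if "i < n" "j < n" for i j
    using abs_scaled_le_imp_nonneg[of "C $$ (i,j)" "S $$ (i,j)" g] assms(5-7) that by auto
  have lengths: "length mus = length lams"
    using assms(1,2) realizes_carrier[OF assms(3)] realizes_carrier[OF assms(4)]
    by (metis carrier_matD(1))
  have "nonneg_mat ((1/2) \<cdot>\<^sub>m (S + g \<cdot>\<^sub>m C)) \<and> nonneg_mat ((1/2) \<cdot>\<^sub>m (S - g \<cdot>\<^sub>m C))"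
    using assms(1,2) entries by (auto simp: nonneg_mat_def)
  moreover have "nonneg_mat (block_mat S C g) \<and> nonneg_mat (block_mat S C (- g))"
    using nonneg_block_mat[OF assms(1), of g C] nonneg_block_mat[OF assms(1), of "- g" C] entries
    by simp
  moreover have "realizes (block_mat S C g) (lams @ map (\<lambda>m. complex_of_real g * m) mus)"
    and "realizes (block_mat S C (- g)) (lams @ map (\<lambda>m. - complex_of_real g * m) mus)"
    using realizes_block_mat[OF assms(3,4) lengths, of g] realizes_block_mat[OF assms(3,4) lengths, of "- g"]
    by simp_all
  ultimately show ?thesis by blast
qed

end
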